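(* Assume the linear setting: $F\equiv 0$, $u_0=0$, $Q e_p=\gamma_p e_p$ with $\gamma_p=\lambda_p^{\frac12-2\overline{\alpha}}$ for all $p\in\mathbb{N}$, for some $\overline{\alpha}>0$, and the coarse integrator is the linear implicit Euler scheme ($\hat S_{\Delta T}=(I-\Delta T A)^{-1}$). Let $T\in(0,\infty)$ and $k\in\mathbb{N}_0$. (1) If $k+1<\overline{\alpha}$, there exists $C_{T,k,\overline{\alpha}}\in(0,\infty)$ such that for all coarse step sizes $\Delta T$ (with $\delta t=\Delta T/J$, $J\in\mathbb{N}$), $$\sup_{n\Delta T\le T}\Big(\mathbb{E}\big[|\epsilon_n^{(k)}|^2\big]\Big)^{1/2}\le C_{T,k,\overline{\alpha}}\,\Delta T^{k+1}.$$ (2) If $k+1\ge\overline{\alpha}$, then for every $\alpha\in(0,\overline{\alpha})$ there exists $C_{T,k,\alpha}\in(0,\infty)$ such that for all such $\Delta T$, $$\sup_{n\Delta T\le T}\Big(\mathbb{E}\big[|\epsilon_n^{(k)}|^2\big]\Big)^{1/2}\le C_{T,k,\alpha}\,\Delta T^{\alpha}.$$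
   Context: $H=L^2(0,1)$ with norm $|\cdot|$ and inner product $\langle\cdot,\cdot\rangle$. $A$ is the Dirichlet Laplacian on $(0,1)$: $D(A)=H^2(0,1)\cap H^1_0(0,1)$, $Au=u''$; $Ae_p=-\lambda_p e_p$ with $\lambda_p=(\pi p)^2$, $e_p(x)=\sqrt2\sin(p\pi x)$, $p\in\mathbb{N}$, an orthonormal basis of $H$. $(e^{tA})_{t\ge0}$ is the associated semigroup. $W^Q(t)=\sum_{p}\sqrt{\gamma_p}\beta_p(t)e_p$ where $(\beta_p)$ are independent standard real Brownian motions on a filtered probability space. One considers the SPDE $du=Au\,dt+F(u)\,dt+dW^Q$, $u(0)=u_0$ (here $F=0$, $u_0=0$). Time grids: $T=N\Delta T$, $\Delta T=J\delta t$ with $N,J\in\mathbb{N}$; $t_n=n\Delta T$, $t_{n,j}=t_n+j\delta t$. Coarse integrator: $\mathcal{G}_n(u)=\hat S_{\Delta T}u+\Delta T\hat S_{\Delta T}F(u)+\hat S_{\Delta T}(W^Q(t_{n+1})-W^Q(t_n))$. Fine integrator $\mathcal{F}_n(u)=v_{n,J}$ where $v_{n,0}=u$ and $v_{n,j+1}=e^{\delta tA}v_{n,j}+\delta t e^{\delta tA}F(v_{n,j})+e^{\delta tA}(W^Q(t_{n,j+1})-W^Q(t_{n,j}))$ (exponential Euler with step $\delta t$). Parareal algorithm: $u_0^{(k)}=u_0$ for all $k$; $u_{n+1}^{(0)}=\mathcal{G}_n(u_n^{(0)})$; $u_{n+1}^{(k+1)}=\mathcal{G}_n(u_n^{(k+1)})+\mathcal{F}_n(u_n^{(k)})-\mathcal{G}_n(u_n^{(k)})$.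 Reference solution: $u_0^{\rm ref}=u_0$, $u_{n+1}^{\rm ref}=\mathcal{F}_n(u_n^{\rm ref})$. Error: $\epsilon_n^{(k)}=u_n^{(k)}-u_n^{\rm ref}$. *)

theory Defs
  imports "HOL-Probability.Probability" "HOL-Library.Function_Algebras"
begin

text \<open>Elements of H = L2(0,1) are represented by their coordinates in the
orthonormal eigenbasis e_p (p = 1,2,...): u is represented by the map
p \<mapsto> <u, e_p>.  Coordinate 0 is unused (it stays 0 throughout).\<close>

definition lam :: "nat \<Rightarrow> real" where
  "lam p = (pi * real p)^2"

definition gam :: "real \<Rightarrow> nat \<Rightarrow> real" where
  "gam abar p = lam p powr (1/2 - 2 * abar)"

definition Hnorm2 :: "(nat \<Rightarrow> real) \<Rightarrow> ennreal" where
  "Hnorm2 u = (\<Sum>p. ennreal ((u (Suc p))^2))"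

definition indep_BMs :: "'a measure \<Rightarrow> (nat \<Rightarrow> real \<Rightarrow> 'a \<Rightarrow> real) \<Rightarrow> bool" where
  "indep_BMs M \<beta> \<longleftrightarrow>
     prob_space M \<and>
     (\<forall>p t. \<beta> p t \<in> borel_measurable M) \<and>
     (\<forall>p. \<forall>\<omega>\<in>space M. \<beta> p 0 \<omega> = 0 \<and> continuous_on {0..} (\<lambda>t. \<beta> p t \<omega>)) \<and>
     (\<forall>(m::nat) (t::nat \<Rightarrow> real). 0 \<le> t 0 \<longrightarrow> (\<forall>i<m. t i < t (Suc i)) \<longrightarrow>
        prob_space.indep_vars M (\<lambda>_. borel)
          (\<lambda>(p, i) \<omega>. \<beta> p (t (Suc i)) \<omega> - \<beta> p (t i) \<omega>) (UNIV \<times> {..<m}) \<and>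
        (\<forall>p. \<forall>i<m. distributed M lborel (\<lambda>\<omega>. \<beta> p (t (Suc i)) \<omega> - \<beta> p (t i) \<omega>)
                        (\<lambda>x. ennreal (normal_density 0 (sqrt (t (Suc i) - t i)) x))))"

text \<open>Coarse integrator (F = 0, linear implicit Euler, S = (I - DT A)^{-1}),
coordinatewise: G_n(u) = S u + S (W^Q(t_{n+1}) - W^Q(t_n)).\<close>
definition coarse_int :: "real \<Rightarrow> real \<Rightarrow> (nat \<Rightarrow> real \<Rightarrow> 'a \<Rightarrow> real) \<Rightarrow> 'a \<Rightarrow> nat \<Rightarrow> (nat \<Rightarrow> real) \<Rightarrow> (nat \<Rightarrow> real)" where
  "coarse_int abar DT \<beta> \<omega> n u = (\<lambda>p.
     u p / (1 + DT * lam p)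
     + sqrt (gam abar p) * (\<beta> p (real (Suc n) * DT) \<omega> - \<beta> p (real n * DT) \<omega>) / (1 + DT * lam p))"

fun fine_v :: "real \<Rightarrow> real \<Rightarrow> nat \<Rightarrow> (nat \<Rightarrow> real \<Rightarrow> 'a \<Rightarrow> real) \<Rightarrow> 'a \<Rightarrow> nat \<Rightarrow> (nat \<Rightarrow> real) \<Rightarrow> nat \<Rightarrow> (nat \<Rightarrow> real)" where
  "fine_v abar DT J \<beta> \<omega> n u 0 = u"
| "fine_v abar DT J \<beta> \<omega> n u (Suc j) = (\<lambda>p.
     exp (- (DT / real J) * lam p) * fine_v abar DT J \<beta> \<omega> n u j p
     + exp (- (DT / real J) * lam p) * sqrt (gam abar p) *
         (\<beta> p (real n * DT + real (Suc j) * (DT / real J)) \<omega>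
          - \<beta> p (real n * DT + real j * (DT / real J)) \<omega>))"

definition fine_int :: "real \<Rightarrow> real \<Rightarrow> nat \<Rightarrow> (nat \<Rightarrow> real \<Rightarrow> 'a \<Rightarrow> real) \<Rightarrow> 'a \<Rightarrow> nat \<Rightarrow> (nat \<Rightarrow> real) \<Rightarrow> (nat \<Rightarrow> real)" where
  "fine_int abar DT J \<beta> \<omega> n u = fine_v abar DT J \<beta> \<omega> n u J"

fun parareal :: "(nat \<Rightarrow> 'v \<Rightarrow> 'v) \<Rightarrow> (nat \<Rightarrow> 'v \<Rightarrow> 'v) \<Rightarrow> 'v \<Rightarrow> nat \<Rightarrow> nat \<Rightarrow> 'v::ab_group_add" where
  "parareal G F u0 k 0 = u0"
| "parareal G F u0 0 (Suc n) = G n (parareal G F u0 0 n)"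
| "parareal G F u0 (Suc k) (Suc n) =
     G n (parareal G F u0 (Suc k) n) + F n (parareal G F u0 k n) - G n (parareal G F u0 k n)"

fun ref_sol :: "(nat \<Rightarrow> 'v \<Rightarrow> 'v) \<Rightarrow> 'v \<Rightarrow> nat \<Rightarrow> 'v" where
  "ref_sol F u0 0 = u0"
| "ref_sol F u0 (Suc n) = F n (ref_sol F u0 n)"

definition err :: "real \<Rightarrow> real \<Rightarrow> nat \<Rightarrow> (nat \<Rightarrow> real \<Rightarrow> 'a \<Rightarrow> real) \<Rightarrow> nat \<Rightarrow> nat \<Rightarrow> 'a \<Rightarrow> (nat \<Rightarrow> real)" where
  "err abar DT J \<beta> k n \<omega> =
     parareal (coarse_int abar DT \<beta> \<omega>) (fine_int abar DT J \<beta> \<omega>) (\<lambda>_. 0) k n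
     - ref_sol (fine_int abar DT J \<beta> \<omega>) (\<lambda>_. 0) n"

definition mean_sq_err :: "'a measure \<Rightarrow> real \<Rightarrow> real \<Rightarrow> nat \<Rightarrow> (nat \<Rightarrow> real \<Rightarrow> 'a \<Rightarrow> real) \<Rightarrow> nat \<Rightarrow> nat \<Rightarrow> ennreal" where
  "mean_sq_err M abar DT J \<beta> k n = (\<integral>\<^sup>+ \<omega>. Hnorm2 (err abar DT J \<beta> k n \<omega>) \<partial>M)"

end

theory Submission
  imports Defs
begin

(* In the linear setting the eigenmodes decouple: the e_p-coordinate of the parareal error is
   sqrt(gamma_p) times a linear combination of the fine Brownian increments of beta_p, and the
   array eps(k,n) of weights obeys the error recursion
     eps(k+1,n+1) = r eps(k+1,n) + (e - r) eps(k,n)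
   with the coarse and exact one-step factors r = 1/(1+x), e = exp(-x), x = DT lambda_p.
   As 0 <= r - e <= 2 min(x,1/x) (1 - r), each iteration gains a factor 2 min(x,1/x) in the
   l2-norm of the weights, and the initial weights have squared norm O(J min(x,1/x)).  The
   increments are independent N(0, DT/J), so the mean square of mode p is O(gamma_p DT
   min(x,1/x)^(2k+1)), which is O(gamma_p DT x^(2 alpha - 1)) for 0 < alpha <= k+1.  Summing
   over p gives O(DT^(2 alpha)) times the sum of lambda_p^(2 (alpha - abar) - 1/2), which is
   finite exactly when alpha < abar.  The bound is uniform in n. *)

lemma sum_power_le_inverse:
  fixes q :: real
  assumes "0 \<le> q" "q < 1"
  shows "(\<Sum>l<n. q^l) \<le> 1 / (1 - q)"
proof -
  have "(\<Sum>l<n. q^l) = (1 - q^n) / (1 - q)"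
    using assms one_diff_power_eq[of q n] by (simp add: field_simps)
  also have "\<dots> \<le> 1 / (1 - q)"
    using assms by (intro divide_right_mono) auto
  finally show ?thesis .
qed

lemma Suc_mult_power_le_inverse:
  fixes q :: real
  assumes "0 \<le> q" "q < 1"
  shows "real (Suc l) * q^l \<le> 1 / (1 - q)"
proof -
  have "real (Suc l) * q^l = (\<Sum>i<Suc l. q^l)" by simp
  also have "\<dots> \<le> (\<Sum>i<Suc l. q^i)"
    using assms by (intro sum_mono power_decreasing) auto
  also have "\<dots> \<le> 1 / (1 - q)" by (rule sum_power_le_inverse[OF assms])
  finally show ?thesis .
qed

lemma sum_exp_minus_power_le:
  fixes y :: real
  assumes "0 < y"
  shows "(\<Sum>l<n. exp (-y)^l) \<le> 1 + 1/y" and "(\<Sum>l<n. exp (-y)^Suc l) \<le> 1/y"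
proof -
  have "1 + y \<le> exp y" by (rule exp_ge_add_one_self)
  then have inv: "1 / (1 - exp (-y)) \<le> 1 + 1/y"
    using assms by (simp add: exp_minus field_simps)
  have "exp (-y) < 1" using assms by simp
  then show le: "(\<Sum>l<n. exp (-y)^l) \<le> 1 + 1/y"
    using sum_power_le_inverse[of "exp (-y)" n] inv by simp
  have "y * (1 + y) \<le> y * exp y"
    using \<open>1 + y \<le> exp y\<close> assms by (intro mult_left_mono) auto
  then have "exp (-y) * (1 + 1/y) \<le> 1/y"
    using assms by (simp add: exp_minus field_simps)
  moreover have "(\<Sum>l<n. exp (-y)^Suc l) = exp (-y) * (\<Sum>l<n. exp (-y)^l)"
    by (simp add: sum_distrib_left)
  moreover have "exp (-y) * (\<Sum>l<n. exp (-y)^l) \<le> exp (-y) * (1 + 1/y)"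
    by (rule mult_left_mono[OF le]) simp
  ultimately show "(\<Sum>l<n. exp (-y)^Suc l) \<le> 1/y"
    by linarith
qed

lemma power_Suc_diff_le:
  fixes r e :: real
  assumes "0 \<le> e" "e \<le> r"
  shows "r^Suc l - e^Suc l \<le> real (Suc l) * r^l * (r - e)"
proof (induction l)
  case 0
  then show ?case by simp
next
  case (Suc l)
  have "r^Suc (Suc l) - e^Suc (Suc l) = r * (r^Suc l - e^Suc l) + e^Suc l * (r - e)"
    by (simp add: algebra_simps)
  also have "\<dots> \<le> r * (real (Suc l) * r^l * (r - e)) + r^Suc l * (r - e)"
    using Suc assms by (intro add_mono mult_left_mono mult_right_mono power_mono) auto
  also have "\<dots> = real (Suc (Suc l)) * r^Suc l * (r - e)"
    by (simp add: algebra_simps)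
  finally show ?case .
qed

lemma sq_diff_le_sq_add_sq:
  fixes a b :: real
  assumes "0 \<le> a" "0 \<le> b"
  shows "(a - b)^2 \<le> a^2 + b^2"
  using assms by (simp add: power2_eq_square algebra_simps)

lemma exp_minus_le_inverse_one_plus:
  fixes x :: real
  assumes "0 \<le> x"
  shows "exp (-x) \<le> 1 / (1 + x)"
  using exp_ge_add_one_self[of x] assms by (simp add: exp_minus field_simps)

lemma inverse_one_plus_minus_exp_minus_le:
  fixes x :: real
  assumes "0 \<le> x"
  shows "1 / (1 + x) - exp (-x) \<le> x^2"
proof -
  have "1 / (1 + x) \<le> 1 - x + x^2"
    using assms by (simp add: field_simps power2_eq_square)
  then show ?thesis
    using exp_ge_add_one_self[of "-x"] by linarith
qed

lemma min_inverse_eq_inverse: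
  fixes x :: real
  shows "1 \<le> x \<Longrightarrow> min x (1/x) = 1/x"
  by (rule min_absorb2) (simp add: divide_le_eq order_trans[of 1 x "x * x"])

lemma min_inverse_eq_self:
  fixes x :: real
  shows "0 < x \<Longrightarrow> x \<le> 1 \<Longrightarrow> min x (1/x) = x"
  by (rule min_absorb1) (simp add: le_divide_eq mult_le_one)

lemma inverse_one_plus_minus_exp_minus_le_min:
  fixes x :: real
  assumes x: "0 < x"
  shows "1 / (1 + x) - exp (-x) \<le> 2 * min x (1/x) * (1 - 1 / (1 + x))"
proof (cases "1 \<le> x")
  case True
  then have "min x (1/x) = 1/x"
    by (rule min_inverse_eq_inverse)
  moreover have "2 * (1/x) * (1 - 1 / (1 + x)) = 2 / (1 + x)"
    using x by (simp add: divide_simps)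
  ultimately show ?thesis
    using x by (simp add: field_simps add_pos_nonneg)
next
  case False
  then have "min x (1/x) = x"
    using x by (simp add: min_inverse_eq_self)
  moreover have "x^2 \<le> 2 * x * (1 - 1 / (1 + x))"
    using x False by (simp add: field_simps power2_eq_square)
  ultimately show ?thesis
    using inverse_one_plus_minus_exp_minus_le[of x] x by simp
qed

lemma min_inverse_power_le_powr:
  fixes x s :: real and m :: nat
  assumes x: "0 < x" and s: "\<bar>s\<bar> \<le> real m"
  shows "min x (1/x) ^ m \<le> x powr s"
proof (cases "x \<le> 1")
  case True
  then have "min x (1/x) = x"
    by (rule min_inverse_eq_self[OF x])
  moreover have "x powr real m \<le> x powr s"
    using s x True by (intro powr_mono') auto
  ultimately show ?thesis
    using x by (simp add: powr_realpow)
next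
  case False
  then have "min x (1/x) = 1/x"
    by (simp add: min_inverse_eq_inverse)
  moreover have "x powr (- real m) \<le> x powr s"
    using s False by (intro powr_mono) auto
  ultimately show ?thesis
    using x by (simp add: powr_minus powr_realpow power_one_over inverse_eq_divide)
qed

(* The summand is the squared weight r^(l+1) - e^l E^(q+1) of the zeroth parareal iterate
   at coarse interval n-1-l and fine step J-1-q (see err_coef_0 below). *)

lemma sum_sq_implicit_minus_exact_large:
  fixes x :: real and J n :: nat
  assumes x: "1 \<le> x" and J: "1 \<le> J"
  defines "r \<equiv> 1 / (1 + x)" and "e \<equiv> exp (-x)" and "E \<equiv> exp (-x / real J)"
  shows "(\<Sum>l<n. \<Sum>q<J. (r^Suc l - e^l * E^Suc q)^2) \<le> 2 * real J / x"
proof -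
  have r0: "0 < r" and e0: "0 < e" and E0: "0 < E"
    using x by (auto simp: r_def e_def E_def)
  have term_le: "(r^Suc l - e^l * E^Suc q)^2 \<le> (r^2)^Suc l + (e^2)^l * (E^2)^Suc q" for l q
    using sq_diff_le_sq_add_sq[of "r^Suc l" "e^l * E^Suc q"] r0 e0 E0
    by (simp add: power_mult_distrib mult.commute flip: power_mult)
  have r_sum: "(\<Sum>l<n. (r^2)^Suc l) \<le> 1 / x"
  proof -
    have "r^2 < 1" using r0 x by (simp add: r_def power_less_one_iff)
    have "(\<Sum>l<n. (r^2)^Suc l) = r^2 * (\<Sum>l<n. (r^2)^l)"
      by (simp add: sum_distrib_left)
    also have "\<dots> \<le> r^2 * (1 / (1 - r^2))"
      using sum_power_le_inverse[of "r^2" n] \<open>r^2 < 1\<close> by (intro mult_left_mono) auto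
    also have "\<dots> = 1 / (x^2 + 2 * x)"
      using x by (simp add: r_def divide_simps power2_eq_square) (simp add: algebra_simps)
    also have "\<dots> \<le> 1 / x"
      using x by (simp add: divide_simps power2_eq_square)
    finally show ?thesis .
  qed
  have e_sum: "(\<Sum>l<n. (e^2)^l) \<le> 3 / 2"
  proof -
    have "(\<Sum>l<n. (e^2)^l) \<le> 1 + 1 / (2 * x)"
      using sum_exp_minus_power_le(1)[of "2 * x" n] x
      by (simp add: e_def power2_eq_square flip: exp_add)
    moreover have "1 / (2 * x) \<le> 1 / 2"
      using x by (simp add: divide_simps)
    ultimately show ?thesis by linarith
  qed
  have E_sum: "(\<Sum>q<J. (E^2)^Suc q) \<le> real J / (2 * x)"
    using sum_exp_minus_power_le(2)[of "2 * x / real J" J] x J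
    by (simp add: E_def power2_eq_square flip: exp_add)
  have "(\<Sum>l<n. \<Sum>q<J. (r^Suc l - e^l * E^Suc q)^2)
      \<le> (\<Sum>l<n. \<Sum>q<J. (r^2)^Suc l + (e^2)^l * (E^2)^Suc q)"
    by (intro sum_mono term_le)
  also have "\<dots> = real J * (\<Sum>l<n. (r^2)^Suc l) + (\<Sum>l<n. (e^2)^l) * (\<Sum>q<J. (E^2)^Suc q)"
    by (simp add: sum.distrib sum_distrib_left sum_distrib_right sum.swap[of _ "{..<J}"])
  also have "\<dots> \<le> real J * (1 / x) + 3 / 2 * (real J / (2 * x))"
    using r_sum e_sum E_sum by (intro add_mono mult_left_mono mult_mono) (auto simp: sum_nonneg)
  also have "\<dots> \<le> 2 * real J / x"
    using x by (simp add: field_simps)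
  finally show ?thesis .
qed

lemma sum_sq_implicit_minus_exact_small:
  fixes x :: real and J n :: nat
  assumes x: "0 < x" "x \<le> 1" and J: "1 \<le> J"
  defines "r \<equiv> 1 / (1 + x)" and "e \<equiv> exp (-x)" and "E \<equiv> exp (-x / real J)"
  shows "(\<Sum>l<n. \<Sum>q<J. (r^Suc l - e^l * E^Suc q)^2) \<le> 34 * real J * x"
proof -
  have r0: "0 < r" and r1: "r < 1" and e0: "0 < e" and er: "e \<le> r"
    using x exp_minus_le_inverse_one_plus[of x] by (auto simp: r_def e_def)
  have E0: "0 < E" and E1: "E \<le> 1" and EJ: "E^J = e"
    using x J by (auto simp: E_def e_def simp flip: exp_of_nat_mult)
  define \<rho> where "\<rho> = sqrt r"
  have \<rho>0: "0 \<le> \<rho>" and \<rho>1: "\<rho> < 1" and \<rho>r: "\<rho>^2 = r"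
    using r0 r1 by (auto simp: \<rho>_def)
  have one_minus_\<rho>: "x / 4 \<le> 1 - \<rho>"
  proof -
    have "1 - r = (1 - \<rho>) * (1 + \<rho>)"
      using \<rho>r by (simp add: algebra_simps power2_eq_square)
    also have "\<dots> \<le> (1 - \<rho>) * 2"
      using \<rho>1 by (intro mult_left_mono) auto
    finally have "x / (2 * (1 + x)) \<le> 1 - \<rho>"
      using x by (simp add: r_def field_simps)
    moreover have "x / 4 \<le> x / (2 * (1 + x))"
      using x by (intro divide_left_mono) auto
    ultimately show ?thesis by linarith
  qed
  have a_le: "r^Suc l - e^Suc l \<le> 4 * x * \<rho>^l" for l
  proof -
    have "r^Suc l - e^Suc l \<le> real (Suc l) * r^l * (r - e)"
      using e0 er by (intro power_Suc_diff_le) auto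
    also have "\<dots> \<le> real (Suc l) * r^l * x^2"
      using inverse_one_plus_minus_exp_minus_le[of x] x r0
      by (intro mult_left_mono) (auto simp: r_def e_def)
    also have "\<dots> = (real (Suc l) * \<rho>^l) * \<rho>^l * x^2"
      using \<rho>r by (simp add: power2_eq_square power_mult_distrib flip: \<rho>r)
    also have "\<dots> \<le> (4 / x) * \<rho>^l * x^2"
    proof -
      have "1 / (1 - \<rho>) \<le> 1 / (x / 4)"
        using one_minus_\<rho> x by (intro divide_left_mono) auto
      then have "real (Suc l) * \<rho>^l \<le> 4 / x"
        using Suc_mult_power_le_inverse[OF \<rho>0 \<rho>1, of l] by simp
      then show ?thesis
        using \<rho>0 by (intro mult_right_mono) auto
    qed
    also have "\<dots> = 4 * x * \<rho>^l"
      using x by (simp add: power2_eq_square)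
    finally show ?thesis .
  qed
  have term_le: "(r^Suc l - e^l * E^Suc q)^2 \<le> 16 * x^2 * r^l + x^2 * (e^2)^l"
    if "q < J" for l q
  proof -
    have "E^J \<le> E^Suc q"
      using E0 E1 that by (intro power_decreasing) auto
    then have "e \<le> E^Suc q"
      by (simp add: EJ)
    then have b0: "0 \<le> e^l * (E^Suc q - e)"
      using e0 by simp
    have "e^l * (E^Suc q - e) \<le> e^l * x"
      using e0 E0 E1 exp_ge_add_one_self[of "-x"] power_le_one[of E "Suc q"]
      by (intro mult_left_mono) (auto simp: e_def)
    then have b_le: "(e^l * (E^Suc q - e))^2 \<le> x^2 * (e^2)^l"
      using b0 power_mono[of _ _ 2] by (fastforce simp: power_mult_distrib mult.commute simp flip: power_mult)
    have "e^Suc l \<le> r^Suc l"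
      using e0 er by (intro power_mono) auto
    then have "(r^Suc l - e^Suc l)^2 \<le> (4 * x * \<rho>^l)^2"
      by (intro power_mono a_le) simp
    also have "\<dots> = 16 * x^2 * r^l"
      using \<rho>r by (simp add: power_mult_distrib flip: power_mult) (metis mult.commute power_mult)
    finally have a_sq: "(r^Suc l - e^Suc l)^2 \<le> 16 * x^2 * r^l" .
    have split: "r^Suc l - e^l * E^Suc q = (r^Suc l - e^Suc l) - e^l * (E^Suc q - e)"
      by (simp add: algebra_simps)
    have "((r^Suc l - e^Suc l) - e^l * (E^Suc q - e))^2
        \<le> (r^Suc l - e^Suc l)^2 + (e^l * (E^Suc q - e))^2"
      using \<open>e^Suc l \<le> r^Suc l\<close> b0 by (intro sq_diff_le_sq_add_sq) auto
    then show ?thesis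
      unfolding split using a_sq b_le by linarith
  qed
  have r_sum: "(\<Sum>l<n. r^l) \<le> 2 / x"
    using sum_power_le_inverse[of r n] r0 r1 x by (simp add: r_def divide_simps)
  have e_sum: "(\<Sum>l<n. (e^2)^l) \<le> 2 / x"
  proof -
    have "(\<Sum>l<n. (e^2)^l) \<le> 1 + 1 / (2 * x)"
      using sum_exp_minus_power_le(1)[of "2 * x" n] x
      by (simp add: e_def power2_eq_square flip: exp_add)
    also have "\<dots> \<le> 2 / x"
      using x by (simp add: divide_simps)
    finally show ?thesis .
  qed
  have "(\<Sum>l<n. \<Sum>q<J. (r^Suc l - e^l * E^Suc q)^2)
      \<le> (\<Sum>l<n. \<Sum>q<J. 16 * x^2 * r^l + x^2 * (e^2)^l)"
    by (intro sum_mono term_le) simp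
  also have "\<dots> = real J * (\<Sum>l<n. 16 * x^2 * r^l + x^2 * (e^2)^l)"
    by (simp add: sum_distrib_left)
  also have "\<dots> = real J * (16 * x^2 * (\<Sum>l<n. r^l) + x^2 * (\<Sum>l<n. (e^2)^l))"
    by (simp add: sum.distrib sum_distrib_left)
  also have "\<dots> \<le> real J * (16 * x^2 * (2 / x) + x^2 * (2 / x))"
    using r_sum e_sum by (intro mult_left_mono add_mono) auto
  also have "\<dots> = 34 * real J * x"
    using x by (simp add: field_simps power2_eq_square)
  finally show ?thesis .
qed

lemma sum_sq_implicit_minus_exact_le:
  fixes x :: real and J n :: nat
  assumes x: "0 < x" and J: "1 \<le> J"
  shows "(\<Sum>l<n. \<Sum>q<J. ((1 / (1 + x))^Suc l - exp (-x)^l * exp (-x / real J)^Suc q)^2)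
    \<le> 34 * real J * min x (1/x)"
proof (cases "1 \<le> x")
  case True
  have "2 * real J / x \<le> 34 * real J * (1/x)"
    using x by (simp add: divide_simps)
  then show ?thesis
    using sum_sq_implicit_minus_exact_large[OF True J, of n]
    unfolding min_inverse_eq_inverse[OF True] by linarith
next
  case False
  then have x1: "x \<le> 1" by simp
  show ?thesis
    using sum_sq_implicit_minus_exact_small[OF x x1 J, of n]
    unfolding min_inverse_eq_self[OF x x1] .
qed

section \<open>Parareal iteration of linear maps\<close>

definition parareal_err :: "(nat \<Rightarrow> 'v \<Rightarrow> 'v) \<Rightarrow> (nat \<Rightarrow> 'v \<Rightarrow> 'v) \<Rightarrow> 'v \<Rightarrow> nat \<Rightarrow> nat \<Rightarrow> 'v::ab_group_add"
  where "parareal_err G F u0 k n = parareal G F u0 k n - ref_sol F u0 n"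

lemma parareal_err_0_right [simp]: "parareal_err G F u0 k 0 = 0"
  by (simp add: parareal_err_def)

lemma parareal_err_Suc_Suc:
  assumes G: "\<And>n u v. G n u - G n v = g (u - v)"
    and F: "\<And>n u v. F n u - F n v = f (u - v)"
    and g: "\<And>u v. g (u - v) = g u - g v"
  shows "parareal_err G F u0 (Suc k) (Suc n)
    = g (parareal_err G F u0 (Suc k) n) + (f (parareal_err G F u0 k n) - g (parareal_err G F u0 k n))"
proof -
  define P' P R where "P' = parareal G F u0 (Suc k) n" and "P = parareal G F u0 k n"
    and "R = ref_sol F u0 n"
  have "parareal_err G F u0 (Suc k) (Suc n) = (G n P' - G n P) + (F n P - F n R)"
    by (simp add: parareal_err_def P'_def P_def R_def)
  also have "\<dots> = g ((P' - R) - (P - R)) + f (P - R)"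
    by (simp add: G F)
  finally show ?thesis
    by (simp add: g parareal_err_def P'_def P_def R_def)
qed

lemma parareal_map:
  assumes G: "\<And>m c. m < K \<Longrightarrow> g m (L c) = L (G m c)"
    and F: "\<And>m c. m < K \<Longrightarrow> f m (L c) = L (F m c)"
    and L_add: "\<And>a b. L (a + b) = L a + L b" and L_diff: "\<And>a b. L (a - b) = L a - L b"
  shows "n \<le> K \<Longrightarrow> parareal g f (L v) k n = L (parareal G F v k n)"
proof (induction k arbitrary: n)
  case 0
  then show ?case by (induction n) (simp_all add: G)
next
  case (Suc k)
  then show ?case by (induction n) (simp_all add: G F L_add L_diff)
qed

lemma ref_sol_map:
  assumes F: "\<And>m c. m < K \<Longrightarrow> f m (L c) = L (F m c)"
  shows "n \<le> K \<Longrightarrow> ref_sol f (L v) n = L (ref_sol F v n)"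
  by (induction n) (simp_all add: F)

lemma parareal_err_map:
  assumes G: "\<And>m c. m < n \<Longrightarrow> g m (L c) = L (G m c)"
    and F: "\<And>m c. m < n \<Longrightarrow> f m (L c) = L (F m c)"
    and L_add: "\<And>a b. L (a + b) = L a + L b" and L_diff: "\<And>a b. L (a - b) = L a - L b"
  shows "parareal_err g f (L v) k n = L (parareal_err G F v k n)"
  using parareal_map[of n g L G f F, OF G F L_add L_diff] ref_sol_map[of n f L F, OF F]
  by (simp add: parareal_err_def L_diff)

section \<open>Error weights of a single eigenmode\<close>

text \<open>A weight array \<open>c a b\<close> holds the coefficient of the noise increment over the \<open>b\<close>-th fine
  step of the \<open>a\<close>-th coarse interval.  For an eigenvalue \<open>\<lambda>\<close>, the coarse and the fine integrator
  act on weights through \<open>coarse_coef r\<close> and \<open>fine_coef e E J\<close>, where \<open>r = 1 / (1 + \<Delta>T \<lambda>)\<close>,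
  \<open>e = exp (- \<Delta>T \<lambda>)\<close> and \<open>E = exp (- \<delta>t \<lambda>)\<close>.\<close>

definition coarse_coef :: "real \<Rightarrow> nat \<Rightarrow> (nat \<Rightarrow> nat \<Rightarrow> real) \<Rightarrow> nat \<Rightarrow> nat \<Rightarrow> real"
  where "coarse_coef r m c = (\<lambda>a b. r * c a b + (if a = m then r else 0))"

definition fine_coef :: "real \<Rightarrow> real \<Rightarrow> nat \<Rightarrow> nat \<Rightarrow> (nat \<Rightarrow> nat \<Rightarrow> real) \<Rightarrow> nat \<Rightarrow> nat \<Rightarrow> real"
  where "fine_coef e E J m c = (\<lambda>a b. e * c a b + (if a = m then E^(J - b) else 0))"

abbreviation err_coef :: "real \<Rightarrow> real \<Rightarrow> real \<Rightarrow> nat \<Rightarrow> nat \<Rightarrow> nat \<Rightarrow> nat \<Rightarrow> nat \<Rightarrow> real"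
  where "err_coef r e E J \<equiv> parareal_err (coarse_coef r) (fine_coef e E J) 0"

lemma parareal_coarse_coef_0:
  "parareal (coarse_coef r) F 0 0 n a b = (if a < n then r^(n - a) else 0)"
proof (induction n)
  case 0
  then show ?case by simp
next
  case (Suc n)
  have "parareal (coarse_coef r) F 0 0 (Suc n) a b
      = r * parareal (coarse_coef r) F 0 0 n a b + (if a = n then r else 0)"
    by (simp add: coarse_coef_def)
  also have "\<dots> = (if a < Suc n then r^(Suc n - a) else 0)"
    unfolding Suc by (auto simp: Suc_diff_le less_Suc_eq)
  finally show ?case .
qed

lemma ref_sol_fine_coef:
  "ref_sol (fine_coef e E J) 0 n a b = (if a < n then e^(n - 1 - a) * E^(J - b) else 0)"
proof (induction n)
  case 0
  then show ?case by simp
next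
  case (Suc n)
  have "ref_sol (fine_coef e E J) 0 (Suc n) a b
      = e * ref_sol (fine_coef e E J) 0 n a b + (if a = n then E^(J - b) else 0)"
    by (simp add: fine_coef_def)
  also have "\<dots> = (if a < Suc n then e^(Suc n - 1 - a) * E^(J - b) else 0)"
  proof (cases "a < n")
    case True
    then have "e * e^(n - 1 - a) = e^(Suc n - 1 - a)"
      by (simp flip: power_Suc add: Suc_diff_Suc)
    with True show ?thesis
      unfolding Suc by (simp add: mult.assoc[symmetric])
  qed (auto simp: Suc less_Suc_eq)
  finally show ?case .
qed

lemma err_coef_0:
  "err_coef r e E J 0 n a b = (if a < n then r^(n - a) - e^(n - 1 - a) * E^(J - b) else 0)"
  by (simp add: parareal_err_def parareal_coarse_coef_0 ref_sol_fine_coef)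

lemma err_coef_Suc_Suc:
  "err_coef r e E J (Suc k) (Suc n)
    = (\<lambda>a b. r * err_coef r e E J (Suc k) n a b + (e - r) * err_coef r e E J k n a b)"
proof -
  have "err_coef r e E J (Suc k) (Suc n)
      = (\<lambda>a b. r * err_coef r e E J (Suc k) n a b)
        + ((\<lambda>a b. e * err_coef r e E J k n a b) - (\<lambda>a b. r * err_coef r e E J k n a b))"
    by (rule parareal_err_Suc_Suc[where g = "\<lambda>c a b. r * c a b" and f = "\<lambda>c a b. e * c a b"])
       (simp_all add: coarse_coef_def fine_coef_def fun_eq_iff algebra_simps)
  then show ?thesis
    by (simp add: fun_eq_iff algebra_simps)
qed

definition coef_norm :: "nat \<Rightarrow> nat \<Rightarrow> (nat \<Rightarrow> nat \<Rightarrow> real) \<Rightarrow> real"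
  where "coef_norm K J c = L2_set (\<lambda>(a, b). c a b) ({..<K} \<times> {..<J})"

lemma coef_norm_eq_sqrt_sum: "coef_norm K J c = sqrt (\<Sum>a<K. \<Sum>b<J. (c a b)^2)"
  by (simp add: coef_norm_def L2_set_def sum.cartesian_product case_prod_beta)

lemma coef_norm_lincomb_le:
  "coef_norm K J (\<lambda>a b. u * c a b + v * d a b) \<le> \<bar>u\<bar> * coef_norm K J c + \<bar>v\<bar> * coef_norm K J d"
proof -
  have scale: "L2_set (\<lambda>i. t * f i) A = \<bar>t\<bar> * L2_set f A" for t and f :: "nat \<times> nat \<Rightarrow> real" and A
    by (simp add: L2_set_def power_mult_distrib real_sqrt_mult flip: sum_distrib_left)
  have "coef_norm K J (\<lambda>a b. u * c a b + v * d a b)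
      = L2_set (\<lambda>i. u * case_prod c i + v * case_prod d i) ({..<K} \<times> {..<J})"
    unfolding coef_norm_def by (rule L2_set_cong) auto
  also have "\<dots> \<le> L2_set (\<lambda>i. u * case_prod c i) ({..<K} \<times> {..<J})
      + L2_set (\<lambda>i. v * case_prod d i) ({..<K} \<times> {..<J})"
    by (rule L2_set_triangle_ineq)
  also have "\<dots> = \<bar>u\<bar> * coef_norm K J c + \<bar>v\<bar> * coef_norm K J d"
    by (simp only: scale coef_norm_def)
  finally show ?thesis .
qed

lemma sum_sq_err_coef_0_le:
  fixes x :: real and J K n :: nat
  assumes x: "0 < x" and J: "1 \<le> J"
  defines "r \<equiv> 1 / (1 + x)" and "e \<equiv> exp (-x)" and "E \<equiv> exp (-x / real J)"
  shows "(\<Sum>a<K. \<Sum>b<J. (err_coef r e E J 0 n a b)^2) \<le> 34 * real J * min x (1/x)"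
proof -
  define h where "h a = (\<Sum>b<J. (err_coef r e E J 0 n a b)^2)" for a
  have "(\<Sum>a<K. h a) \<le> (\<Sum>a<max K n. h a)"
    by (intro sum_mono2) (auto simp: h_def intro: sum_nonneg)
  also have "\<dots> = (\<Sum>a<n. h a)"
    by (rule sum.mono_neutral_right) (auto simp: h_def err_coef_0)
  also have "\<dots> = (\<Sum>l<n. \<Sum>q<J. (r^Suc l - e^l * E^Suc q)^2)"
  proof -
    have "h (n - Suc l) = (\<Sum>q<J. (r^Suc l - e^l * E^Suc q)^2)" if "l < n" for l
    proof -
      have "h (n - Suc l) = (\<Sum>b<J. (r^Suc l - e^l * E^(J - b))^2)"
        using that by (simp add: h_def err_coef_0 Suc_diff_Suc)
      also have "\<dots> = (\<Sum>b<J. (\<lambda>q. (r^Suc l - e^l * E^Suc q)^2) (J - Suc b))"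
        by (intro sum.cong refl) (simp add: Suc_diff_Suc del: power_Suc)
      also have "\<dots> = (\<Sum>q<J. (r^Suc l - e^l * E^Suc q)^2)"
        by (rule sum.nat_diff_reindex)
      finally show ?thesis .
    qed
    then show ?thesis
      by (subst sum.nat_diff_reindex[symmetric]) (rule sum.cong, auto)
  qed
  also have "\<dots> \<le> 34 * real J * min x (1/x)"
    unfolding r_def e_def E_def by (rule sum_sq_implicit_minus_exact_le[OF x J])
  finally show ?thesis
    unfolding h_def .
qed

lemma coef_norm_err_coef_le:
  fixes x :: real and J K :: nat
  assumes x: "0 < x" and J: "1 \<le> J"
  defines "r \<equiv> 1 / (1 + x)" and "e \<equiv> exp (-x)" and "E \<equiv> exp (-x / real J)"
    and "\<mu> \<equiv> min x (1/x)"
  shows "coef_norm K J (err_coef r e E J k n) \<le> (2 * \<mu>)^k * sqrt (34 * real J * \<mu>)"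
proof (induction k arbitrary: n)
  case 0
  have "(\<Sum>a<K. \<Sum>b<J. (err_coef r e E J 0 n a b)^2) \<le> 34 * real J * \<mu>"
    unfolding r_def e_def E_def \<mu>_def by (rule sum_sq_err_coef_0_le[OF x J])
  then show ?case
    unfolding coef_norm_eq_sqrt_sum power_0 mult_1 by (rule real_sqrt_le_mono)
next
  case (Suc k)
  define B where "B k = (2 * \<mu>)^k * sqrt (34 * real J * \<mu>)" for k
  have \<mu>0: "0 \<le> \<mu>" and B0: "0 \<le> B k" for k
    using x by (simp_all add: \<mu>_def B_def)
  have r0: "0 < r" and er: "e \<le> r"
    using x exp_minus_le_inverse_one_plus[of x] by (simp_all add: r_def e_def)
  have r_minus_e: "r - e \<le> 2 * \<mu> * (1 - r)"
    using inverse_one_plus_minus_exp_minus_le_min[OF x] by (simp add: r_def e_def \<mu>_def)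
  have IH_k: "coef_norm K J (err_coef r e E J k m) \<le> B k" for m
    using Suc.IH unfolding B_def .
  show ?case
  proof (induction n)
    case 0
    show ?case
      using B0[of "Suc k"] by (simp add: B_def coef_norm_eq_sqrt_sum)
  next
    case (Suc n)
    have "coef_norm K J (err_coef r e E J (Suc k) (Suc n))
        \<le> r * coef_norm K J (err_coef r e E J (Suc k) n) + (r - e) * coef_norm K J (err_coef r e E J k n)"
      using coef_norm_lincomb_le[of K J r _ "e - r"] r0 er by (simp add: err_coef_Suc_Suc)
    also have "\<dots> \<le> r * B (Suc k) + (r - e) * B k"
      using mult_left_mono[OF Suc.IH, of r] mult_left_mono[OF IH_k[of n], of "r - e"] r0 er
      unfolding B_def by linarith
    also have "\<dots> \<le> r * B (Suc k) + 2 * \<mu> * (1 - r) * B k"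
      using r_minus_e B0 by (intro add_left_mono mult_right_mono)
    also have "\<dots> = B (Suc k)"
      by (simp add: B_def algebra_simps)
    finally show ?case
      unfolding B_def .
  qed
qed

section \<open>Reduction of the parareal error to the weights\<close>

definition fine_increment :: "real \<Rightarrow> nat \<Rightarrow> (real \<Rightarrow> 'a \<Rightarrow> real) \<Rightarrow> 'a \<Rightarrow> nat \<Rightarrow> nat \<Rightarrow> real"
  where "fine_increment DT J B \<omega> a b
    = B (real a * DT + real (Suc b) * (DT / real J)) \<omega> - B (real a * DT + real b * (DT / real J)) \<omega>"

definition coef_pairing :: "nat \<Rightarrow> nat \<Rightarrow> (nat \<Rightarrow> nat \<Rightarrow> real) \<Rightarrow> (nat \<Rightarrow> nat \<Rightarrow> real) \<Rightarrow> real"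
  where "coef_pairing K J c w = (\<Sum>a<K. \<Sum>b<J. c a b * w a b)"

lemma coef_pairing_zero [simp]: "coef_pairing K J 0 w = 0"
  by (simp add: coef_pairing_def)

lemma coef_pairing_add: "coef_pairing K J (c + d) w = coef_pairing K J c w + coef_pairing K J d w"
  by (simp add: coef_pairing_def algebra_simps sum.distrib)

lemma coef_pairing_diff: "coef_pairing K J (c - d) w = coef_pairing K J c w - coef_pairing K J d w"
  by (simp add: coef_pairing_def algebra_simps sum_subtractf)

lemma sum_sum_if_eq:
  fixes f :: "nat \<Rightarrow> 'b::comm_monoid_add" and m K J :: nat
  assumes "m < K"
  shows "(\<Sum>a<K. \<Sum>b<J. if a = m then f b else 0) = (\<Sum>b<J. f b)"
proof -
  have "(\<Sum>a<K. \<Sum>b<J. if a = m then f b else 0) = (\<Sum>a<K. if a = m then (\<Sum>b<J. f b) else 0)"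
    by (intro sum.cong) auto
  then show ?thesis
    using assms by simp
qed

lemma coef_pairing_coarse_coef:
  assumes "m < K"
  shows "coef_pairing K J (coarse_coef r m c) w = r * coef_pairing K J c w + r * (\<Sum>b<J. w m b)"
proof -
  have "coarse_coef r m c a b * w a b = r * (c a b * w a b) + (if a = m then r * w m b else 0)" for a b
    by (simp add: coarse_coef_def algebra_simps)
  then show ?thesis
    using sum_sum_if_eq[OF assms, where J = J and f = "\<lambda>b. r * w m b"]
    by (simp add: coef_pairing_def sum.distrib sum_distrib_left)
qed

lemma coef_pairing_fine_coef:
  assumes "m < K"
  shows "coef_pairing K J (fine_coef e E J m c) w = e * coef_pairing K J c w + (\<Sum>b<J. E^(J - b) * w m b)"
proof -
  have "fine_coef e E J m c a b * w a b = e * (c a b * w a b) + (if a = m then E^(J - b) * w m b else 0)"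
    for a b
    by (simp add: fine_coef_def algebra_simps)
  then show ?thesis
    using sum_sum_if_eq[OF assms, where J = J and f = "\<lambda>b. E^(J - b) * w m b"]
    by (simp add: coef_pairing_def sum.distrib sum_distrib_left)
qed

lemma sum_fine_increment:
  assumes "1 \<le> J"
  shows "(\<Sum>b<J. fine_increment DT J B \<omega> a b) = B (real (Suc a) * DT) \<omega> - B (real a * DT) \<omega>"
proof -
  have "(\<Sum>b<J. fine_increment DT J B \<omega> a b)
      = B (real a * DT + real J * (DT / real J)) \<omega> - B (real a * DT) \<omega>"
    unfolding fine_increment_def
    by (subst sum_lessThan_telescope[where f = "\<lambda>b. B (real a * DT + real b * (DT / real J)) \<omega>"]) simp
  also have "real a * DT + real J * (DT / real J) = real (Suc a) * DT"
    using assms by (simp add: algebra_simps)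
  finally show ?thesis .
qed

lemma fine_v_eq_sum:
  fixes DT :: real and J p :: nat
  defines "E \<equiv> exp (- (DT / real J) * lam p)"
  shows "fine_v abar DT J \<beta> \<omega> n u j p = E^j * u p
    + sqrt (gam abar p) * (\<Sum>i<j. E^(j - i) * fine_increment DT J (\<beta> p) \<omega> n i)"
proof (induction j)
  case 0
  then show ?case by simp
next
  case (Suc j)
  have "(\<Sum>i<Suc j. E^(Suc j - i) * fine_increment DT J (\<beta> p) \<omega> n i)
      = E * (\<Sum>i<j. E^(j - i) * fine_increment DT J (\<beta> p) \<omega> n i) + E * fine_increment DT J (\<beta> p) \<omega> n j"
    by (simp add: sum_distrib_left Suc_diff_le mult.assoc)
  then show ?case
    using Suc by (simp add: E_def fine_increment_def algebra_simps)
qed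

lemma coarse_int_apply:
  assumes "1 \<le> J"
  shows "coarse_int abar DT \<beta> \<omega> m u p = 1 / (1 + DT * lam p) * u p
    + 1 / (1 + DT * lam p) * sqrt (gam abar p) * (\<Sum>b<J. fine_increment DT J (\<beta> p) \<omega> m b)"
  by (simp add: coarse_int_def sum_fine_increment[OF assms] field_simps)

lemma fine_int_apply:
  assumes "1 \<le> J"
  shows "fine_int abar DT J \<beta> \<omega> m u p = exp (- (DT * lam p)) * u p
    + sqrt (gam abar p) * (\<Sum>b<J. exp (- (DT * lam p) / real J)^(J - b) * fine_increment DT J (\<beta> p) \<omega> m b)"
proof -
  have "exp (- (DT / real J) * lam p) = exp (- (DT * lam p) / real J)"
    by (simp add: field_simps)
  moreover have "exp (- (DT * lam p) / real J)^J = exp (- (DT * lam p))"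
    using assms by (simp flip: exp_of_nat_mult)
  ultimately show ?thesis
    by (simp add: fine_int_def fine_v_eq_sum)
qed

abbreviation mode_err_coef :: "real \<Rightarrow> nat \<Rightarrow> nat \<Rightarrow> nat \<Rightarrow> nat \<Rightarrow> nat \<Rightarrow> real"
  where "mode_err_coef x J \<equiv> err_coef (1 / (1 + x)) (exp (-x)) (exp (-x / real J)) J"

lemma err_eq_coef_pairing:
  fixes abar DT :: real and J k n p :: nat
  assumes J: "1 \<le> J"
  shows "err abar DT J \<beta> k n \<omega> p
    = sqrt (gam abar p) * coef_pairing n J (mode_err_coef (DT * lam p) J k n) (fine_increment DT J (\<beta> p) \<omega>)"
proof -
  define x where "x = DT * lam p"
  define s r e E where "s = sqrt (gam abar p)" and "r = 1 / (1 + x)" and "e = exp (-x)"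
    and "E = exp (-x / real J)"
  define w where "w = fine_increment DT J (\<beta> p) \<omega>"
  define g where "g m y = r * y + r * s * (\<Sum>b<J. w m b)" for m y
  define f where "f m y = e * y + s * (\<Sum>b<J. E^(J - b) * w m b)" for m y
  define L where "L c = s * coef_pairing n J c w" for c
  have "err abar DT J \<beta> k n \<omega> p
      = parareal_err (coarse_int abar DT \<beta> \<omega>) (fine_int abar DT J \<beta> \<omega>) (\<lambda>_. 0) k n p"
    by (simp add: err_def parareal_err_def)
  also have "\<dots> = parareal_err g f 0 k n"
    using parareal_err_map[where L = "\<lambda>u. u p" and g = g and f = f and G = "coarse_int abar DT \<beta> \<omega>"
        and F = "fine_int abar DT J \<beta> \<omega>" and v = "\<lambda>_. 0" and k = k and n = n]
    by (simp add: g_def f_def coarse_int_apply[OF J] fine_int_apply[OF J] r_def e_def E_def s_def w_def x_def)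
  also have "\<dots> = L (err_coef r e E J k n)"
    using parareal_err_map[where L = L and g = g and f = f and G = "coarse_coef r"
        and F = "fine_coef e E J" and v = 0 and k = k and n = n]
    by (simp add: L_def g_def f_def coef_pairing_coarse_coef coef_pairing_fine_coef
        coef_pairing_add coef_pairing_diff algebra_simps)
  finally show ?thesis
    by (simp add: L_def s_def r_def e_def E_def w_def x_def)
qed

section \<open>Gaussian increments\<close>

lemma sum_lessThan_mult:
  fixes f :: "nat \<Rightarrow> 'a::comm_monoid_add" and K J :: nat
  shows "(\<Sum>i<K * J. f i) = (\<Sum>a<K. \<Sum>b<J. f (a * J + b))"
proof -
  have "(\<Sum>b<J. f (a * J + b)) = sum f {a * J..<a * J + J}" for a
    using sum.shift_bounds_nat_ivl[of f 0 "a * J" J] by (simp add: atLeast0LessThan add.commute)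
  then show ?thesis
    by (simp add: sum.nat_group)
qed

lemma (in prob_space) normal_distributed_second_moment:
  assumes \<sigma>: "0 < \<sigma>" and X: "distributed M lborel X (normal_density 0 \<sigma>)"
  shows "integrable M X" and "integrable M (\<lambda>\<omega>. (X \<omega>)^2)"
    and "expectation X = 0" and "expectation (\<lambda>\<omega>. (X \<omega>)^2) = \<sigma>^2"
proof -
  show "integrable M X"
    using distributed_integrable_var[OF X] integrable_normal_moment_nz_1[OF \<sigma>] by simp
  show "integrable M (\<lambda>\<omega>. (X \<omega>)^2)"
    using distributed_integrable[OF X, of "\<lambda>x. x^2"] integrable_normal_moment[OF \<sigma>, where \<mu> = 0 and k = 2] by simp
  show E: "expectation X = 0"
    by (rule normal_distributed_expectation[OF \<sigma> X])
  show "expectation (\<lambda>\<omega>. (X \<omega>)^2) = \<sigma>^2"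
    using normal_distributed_variance[OF \<sigma> X] by (simp add: E)
qed

lemma (in prob_space) nn_integral_weighted_sum_sq_indep_normal:
  fixes X :: "'i \<Rightarrow> 'a \<Rightarrow> real"
  assumes I: "finite I"
    and indep: "\<And>i j. i \<in> I \<Longrightarrow> j \<in> I \<Longrightarrow> i \<noteq> j \<Longrightarrow> indep_var borel (X i) borel (X j)"
    and normal: "\<And>i. i \<in> I \<Longrightarrow> distributed M lborel (X i) (normal_density 0 \<sigma>)"
    and \<sigma>: "0 < \<sigma>"
  shows "(\<integral>\<^sup>+\<omega>. ennreal ((\<Sum>i\<in>I. d i * X i \<omega>)^2) \<partial>M) = ennreal (\<sigma>^2 * (\<Sum>i\<in>I. (d i)^2))"
proof -
  note moments = normal_distributed_second_moment[OF \<sigma> normal]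
  have prod: "integrable M (\<lambda>\<omega>. X i \<omega> * X j \<omega>)
      \<and> expectation (\<lambda>\<omega>. X i \<omega> * X j \<omega>) = (if i = j then \<sigma>^2 else 0)"
    if "i \<in> I" "j \<in> I" for i j
  proof (cases "i = j")
    case True
    then show ?thesis
      using moments(2,4)[OF that(1)] by (simp add: power2_eq_square)
  next
    case False
    then show ?thesis
      using indep_var_integrable[OF indep[OF that False]] indep_var_lebesgue_integral[OF indep[OF that False]]
        moments(1,3) that by simp
  qed
  have sq: "(\<Sum>i\<in>I. d i * X i \<omega>)^2 = (\<Sum>i\<in>I. \<Sum>j\<in>I. d i * d j * (X i \<omega> * X j \<omega>))" for \<omega>
    by (simp add: power2_eq_square sum_product mult_ac)
  have "integrable M (\<lambda>\<omega>. (\<Sum>i\<in>I. d i * X i \<omega>)^2)"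
    unfolding sq using prod by (intro Bochner_Integration.integrable_sum integrable_mult_right) auto
  then have "(\<integral>\<^sup>+\<omega>. ennreal ((\<Sum>i\<in>I. d i * X i \<omega>)^2) \<partial>M)
      = ennreal (expectation (\<lambda>\<omega>. (\<Sum>i\<in>I. d i * X i \<omega>)^2))"
    by (intro nn_integral_eq_integral) auto
  also have "expectation (\<lambda>\<omega>. (\<Sum>i\<in>I. d i * X i \<omega>)^2)
      = (\<Sum>i\<in>I. \<Sum>j\<in>I. d i * d j * (if i = j then \<sigma>^2 else 0))"
    unfolding sq using prod by (simp add: Bochner_Integration.integral_sum)
  also have "\<dots> = \<sigma>^2 * (\<Sum>i\<in>I. (d i)^2)"
    using I by (simp add: sum_distrib_left power2_eq_square mult_ac if_distrib[of "\<lambda>x. _ * x"] cong: if_cong)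
  finally show ?thesis .
qed

lemma nn_integral_coef_pairing_fine_increment_sq:
  assumes BM: "indep_BMs M \<beta>" and DT: "0 < DT" and J: "1 \<le> J"
  shows "(\<integral>\<^sup>+\<omega>. ennreal ((s * coef_pairing K J c (fine_increment DT J (\<beta> p) \<omega>))^2) \<partial>M)
    = ennreal (s^2 * (DT / real J) * (\<Sum>a<K. \<Sum>b<J. (c a b)^2))"
proof -
  interpret prob_space M
    using BM by (simp add: indep_BMs_def)
  define dt where "dt = DT / real J"
  define X where "X i \<omega> = \<beta> p (real (Suc i) * dt) \<omega> - \<beta> p (real i * dt) \<omega>" for i \<omega>
  have dt: "0 < dt"
    using DT J by (simp add: dt_def)
  have grid: "indep_vars (\<lambda>_. borel) (\<lambda>(q, i) \<omega>. \<beta> q (real (Suc i) * dt) \<omega> - \<beta> q (real i * dt) \<omega>) (UNIV \<times> {..<K * J})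
      \<and> (\<forall>q. \<forall>i<K * J. distributed M lborel (\<lambda>\<omega>. \<beta> q (real (Suc i) * dt) \<omega> - \<beta> q (real i * dt) \<omega>)
          (\<lambda>x. ennreal (normal_density 0 (sqrt (real (Suc i) * dt - real i * dt)) x)))"
    using dt
    by (intro BM[unfolded indep_BMs_def, THEN conjunct2, THEN conjunct2, THEN conjunct2, rule_format,
          where m = "K * J" and t = "\<lambda>i. real i * dt"]) (auto simp: distrib_right)
  have indep: "indep_var borel (X i) borel (X j)" if "i < K * J" "j < K * J" "i \<noteq> j" for i j
  proof -
    have "indep_vars (\<lambda>_. borel) (\<lambda>(q, i) \<omega>. \<beta> q (real (Suc i) * dt) \<omega> - \<beta> q (real i * dt) \<omega>) {(p, i), (p, j)}"
      using grid that by (auto intro: indep_vars_subset)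
    from indep_vars_sum[OF _ _ this] that show ?thesis
      by (simp add: X_def[abs_def])
  qed
  have normal: "distributed M lborel (X i) (normal_density 0 (sqrt dt))" if "i < K * J" for i
    using grid that by (simp add: X_def[abs_def] distrib_right)
  have "fine_increment DT J (\<beta> p) \<omega> a b = X (a * J + b) \<omega>" if "b < J" for a b \<omega>
    using J by (simp add: fine_increment_def X_def dt_def field_simps)
  then have "s * coef_pairing K J c (fine_increment DT J (\<beta> p) \<omega>)
      = (\<Sum>i<K * J. s * c (i div J) (i mod J) * X i \<omega>)" for \<omega>
    using J by (simp add: coef_pairing_def sum_lessThan_mult sum_distrib_left mult.assoc)
  moreover have "(\<Sum>i<K * J. (s * c (i div J) (i mod J))^2) = s^2 * (\<Sum>a<K. \<Sum>b<J. (c a b)^2)"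
    using J by (simp add: sum_lessThan_mult sum_distrib_left power_mult_distrib)
  ultimately show ?thesis
    using nn_integral_weighted_sum_sq_indep_normal[of "{..<K * J}" X "sqrt dt" "\<lambda>i. s * c (i div J) (i mod J)"]
      indep normal dt by (simp add: dt_def mult_ac)
qed

lemma mean_sq_err_eq_suminf:
  assumes BM: "indep_BMs M \<beta>" and J: "1 \<le> J" and DT: "0 < DT"
  shows "mean_sq_err M abar DT J \<beta> k n = (\<Sum>p. ennreal (gam abar (Suc p) * (DT / real J)
    * (\<Sum>a<n. \<Sum>b<J. (mode_err_coef (DT * lam (Suc p)) J k n a b)^2)))"
proof -
  have [measurable]: "\<beta> p t \<in> borel_measurable M" for p t
    using BM by (simp add: indep_BMs_def)
  have "mean_sq_err M abar DT J \<beta> k n = (\<integral>\<^sup>+\<omega>. (\<Sum>p. ennreal ((sqrt (gam abar (Suc p))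
      * coef_pairing n J (mode_err_coef (DT * lam (Suc p)) J k n) (fine_increment DT J (\<beta> (Suc p)) \<omega>))^2)) \<partial>M)"
    by (simp add: mean_sq_err_def Hnorm2_def err_eq_coef_pairing[OF J])
  also have "\<dots> = (\<Sum>p. \<integral>\<^sup>+\<omega>. ennreal ((sqrt (gam abar (Suc p))
      * coef_pairing n J (mode_err_coef (DT * lam (Suc p)) J k n) (fine_increment DT J (\<beta> (Suc p)) \<omega>))^2) \<partial>M)"
    by (rule nn_integral_suminf) (simp add: coef_pairing_def fine_increment_def)
  also have "\<dots> = (\<Sum>p. ennreal (gam abar (Suc p) * (DT / real J)
      * (\<Sum>a<n. \<Sum>b<J. (mode_err_coef (DT * lam (Suc p)) J k n a b)^2)))"
    by (simp add: nn_integral_coef_pairing_fine_increment_sq[OF BM DT J] gam_def)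
  finally show ?thesis .
qed

lemma mode_mean_sq_err_le:
  fixes DT \<alpha> abar :: real and J k n p :: nat
  assumes DT: "0 < DT" and J: "1 \<le> J" and p: "0 < p" and \<alpha>: "0 < \<alpha>" "\<alpha> \<le> real k + 1"
  shows "gam abar p * (DT / real J) * (\<Sum>a<n. \<Sum>b<J. (mode_err_coef (DT * lam p) J k n a b)^2)
    \<le> DT powr (2 * \<alpha>) * (34 * 4^k * lam p powr (2 * (\<alpha> - abar) - 1/2))"
proof -
  define x where "x = DT * lam p"
  define \<mu> where "\<mu> = min x (1/x)"
  have lam: "0 < lam p"
    using p by (simp add: lam_def)
  then have x: "0 < x"
    using DT by (simp add: x_def)
  then have \<mu>: "0 \<le> \<mu>"
    by (simp add: \<mu>_def)
  have "(\<Sum>a<n. \<Sum>b<J. (mode_err_coef x J k n a b)^2) = (coef_norm n J (mode_err_coef x J k n))^2"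
    by (simp add: coef_norm_eq_sqrt_sum sum_nonneg)
  also have "\<dots> \<le> ((2 * \<mu>)^k * sqrt (34 * real J * \<mu>))^2"
    using coef_norm_err_coef_le[OF x J, of n k n] by (intro power_mono) (simp_all add: \<mu>_def coef_norm_def)
  also have "\<dots> = (2 * \<mu>)^(2 * k) * (34 * real J * \<mu>)"
    using \<mu> by (simp only: power_mult_distrib power_even_eq real_sqrt_pow2 mult_nonneg_nonneg
        zero_le_numeral of_nat_0_le_iff)
  also have "\<dots> = 34 * real J * 4^k * \<mu>^(2 * k + 1)"
    by (simp add: power_mult_distrib power_mult power_add)
  finally have sum_le: "(\<Sum>a<n. \<Sum>b<J. (mode_err_coef x J k n a b)^2) \<le> 34 * real J * 4^k * \<mu>^(2 * k + 1)" .
  have "\<mu>^(2 * k + 1) \<le> x powr (2 * \<alpha> - 1)"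
    unfolding \<mu>_def using \<alpha> by (intro min_inverse_power_le_powr[OF x]) auto
  then have "gam abar p * (DT / real J) * (\<Sum>a<n. \<Sum>b<J. (mode_err_coef x J k n a b)^2)
      \<le> gam abar p * (DT / real J) * (34 * real J * 4^k * x powr (2 * \<alpha> - 1))"
    using sum_le DT by (intro mult_left_mono order_trans[OF sum_le]) (auto simp: gam_def)
  also have "\<dots> = 34 * 4^k * (DT * DT powr (2 * \<alpha> - 1)) * (lam p powr (1/2 - 2 * abar) * lam p powr (2 * \<alpha> - 1))"
    using DT J lam by (simp add: gam_def x_def powr_mult field_simps)
  also have "\<dots> = DT powr (2 * \<alpha>) * (34 * 4^k * lam p powr (2 * (\<alpha> - abar) - 1/2))"
  proof -
    have "DT * DT powr (2 * \<alpha> - 1) = DT powr (2 * \<alpha>)"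
      using powr_add[of DT 1 "2 * \<alpha> - 1"] DT by simp
    moreover have "lam p powr (1/2 - 2 * abar) * lam p powr (2 * \<alpha> - 1) = lam p powr (2 * (\<alpha> - abar) - 1/2)"
      by (simp add: algebra_simps flip: powr_add)
    ultimately show ?thesis by simp
  qed
  finally show ?thesis
    unfolding x_def .
qed

lemma summable_lam_powr:
  assumes "q < -1/2"
  shows "summable (\<lambda>p. lam (Suc p) powr q)"
proof -
  have "lam (Suc p) powr q = pi powr (2 * q) * real (Suc p) powr (2 * q)" for p
  proof -
    have "lam (Suc p) = (pi * real (Suc p)) powr 2"
      by (simp add: lam_def powr_realpow)
    then show ?thesis
      by (simp only: powr_powr powr_mult pi_ge_zero of_nat_0_le_iff mult.commute[of 2 q])
  qed
  moreover have "summable (\<lambda>p. real (Suc p) powr (2 * q))"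
    using assms summable_real_powr_iff[of "2 * q"] summable_Suc_iff[of "\<lambda>p. real p powr (2 * q)"] by simp
  ultimately show ?thesis
    by (simp add: summable_mult)
qed

lemma mean_sq_err_le_powr:
  fixes abar \<alpha> :: real and k :: nat
  assumes \<alpha>: "0 < \<alpha>" "\<alpha> \<le> real k + 1" "\<alpha> < abar"
  shows "\<exists>C>0. \<forall>DT J (M::'a measure) \<beta> n. 0 < DT \<longrightarrow> 1 \<le> J \<longrightarrow> indep_BMs M \<beta> \<longrightarrow>
    mean_sq_err M abar DT J \<beta> k n \<le> ennreal ((C * DT powr \<alpha>)^2)"
proof -
  define f where "f p = 34 * 4^k * lam (Suc p) powr (2 * (\<alpha> - abar) - 1/2)" for p
  have "summable (\<lambda>p. lam (Suc p) powr (2 * (\<alpha> - abar) - 1/2))"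
    using \<alpha> by (intro summable_lam_powr) simp
  then have "summable f"
    unfolding f_def by (rule summable_mult)
  moreover have "0 \<le> f p" for p
    by (simp add: f_def)
  ultimately have f: "summable f" "\<And>p. 0 \<le> f p" .
  define C where "C = sqrt (suminf f) + 1"
  have "0 \<le> suminf f"
    using suminf_nonneg[OF f] .
  then have C: "0 < C" and C_sq: "suminf f \<le> C^2"
    by (simp_all add: C_def add_pos_nonneg power2_eq_square algebra_simps)
  have "mean_sq_err M abar DT J \<beta> k n \<le> ennreal ((C * DT powr \<alpha>)^2)"
    if DT: "0 < DT" and J: "1 \<le> J" and BM: "indep_BMs M \<beta>" for DT J M \<beta> n
  proof -
    have mode: "ennreal (gam abar (Suc p) * (DT / real J)
        * (\<Sum>a<n. \<Sum>b<J. (mode_err_coef (DT * lam (Suc p)) J k n a b)^2)) \<le> ennreal (DT powr (2 * \<alpha>) * f p)"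
      for p
      unfolding f_def by (intro ennreal_leI mode_mean_sq_err_le[OF DT J zero_less_Suc \<alpha>(1,2)])
    have "mean_sq_err M abar DT J \<beta> k n \<le> (\<Sum>p. ennreal (DT powr (2 * \<alpha>) * f p))"
      unfolding mean_sq_err_eq_suminf[OF BM J DT] by (intro suminf_le mode summableI)
    also have "\<dots> = ennreal (\<Sum>p. DT powr (2 * \<alpha>) * f p)"
      using f by (intro suminf_ennreal2 summable_mult) auto
    also have "(\<Sum>p. DT powr (2 * \<alpha>) * f p) = DT powr (2 * \<alpha>) * suminf f"
      by (rule suminf_mult[OF f(1)])
    also have "\<dots> \<le> ennreal ((C * DT powr \<alpha>)^2)"
    proof (rule ennreal_leI)
      have "(C * DT powr \<alpha>)^2 = C^2 * DT powr (2 * \<alpha>)"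
        by (simp only: power_mult_distrib power2_eq_square[of "DT powr \<alpha>"] mult_2 powr_add)
      then show "DT powr (2 * \<alpha>) * suminf f \<le> (C * DT powr \<alpha>)^2"
        using C_sq by (simp add: mult.commute mult_right_mono)
    qed
    finally show ?thesis .
  qed
  with C show ?thesis
    by blast
qed

lemma mean_sq_err_le_power:
  fixes abar :: real and k :: nat
  assumes "real k + 1 < abar"
  shows "\<exists>C>0. \<forall>DT J (M::'a measure) \<beta> n. 0 < DT \<longrightarrow> 1 \<le> J \<longrightarrow> indep_BMs M \<beta> \<longrightarrow>
    mean_sq_err M abar DT J \<beta> k n \<le> ennreal ((C * DT ^ (k + 1))^2)"
proof -
  have "DT powr (real k + 1) = DT ^ (k + 1)" if "0 < DT" for DT :: real
    using powr_realpow[OF that, of "k + 1"] by (simp add: add.commute)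
  then show ?thesis
    using mean_sq_err_le_powr[of "real k + 1" k abar] assms by simp
qed

theorem theorem4p1:
  fixes T abar :: real and k :: nat
  assumes "0 < T" and "0 < abar"
  shows
   "(real k + 1 < abar \<longrightarrow>
      (\<exists>C>0. \<forall>(N::nat) (J::nat) (M::'a measure) \<beta>. 1 \<le> N \<longrightarrow> 1 \<le> J \<longrightarrow> indep_BMs M \<beta> \<longrightarrow>
         (\<forall>n. real n * (T / real N) \<le> T \<longrightarrow>
            mean_sq_err M abar (T / real N) J \<beta> k n \<le> ennreal ((C * (T / real N) ^ (k + 1))\<^sup>2))))
    \<and> (abar \<le> real k + 1 \<longrightarrow>
      (\<forall>\<alpha>. 0 < \<alpha> \<and> \<alpha> < abar \<longrightarrow>
        (\<exists>C>0. \<forall>(N::nat) (J::nat) (M::'a measure) \<beta>. 1 \<le> N \<longrightarrow> 1 \<le> J \<longrightarrow> indep_BMs M \<beta> \<longrightarrow>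
           (\<forall>n. real n * (T / real N) \<le> T \<longrightarrow>
              mean_sq_err M abar (T / real N) J \<beta> k n \<le> ennreal ((C * (T / real N) powr \<alpha>)\<^sup>2)))))"
proof (intro conjI impI allI)
  have DT: "0 < T / real N" if "1 \<le> N" for N :: nat
    using \<open>0 < T\<close> that by simp
  show "\<exists>C>0. \<forall>(N::nat) (J::nat) (M::'a measure) \<beta>. 1 \<le> N \<longrightarrow> 1 \<le> J \<longrightarrow> indep_BMs M \<beta> \<longrightarrow>
      (\<forall>n. real n * (T / real N) \<le> T \<longrightarrow>
        mean_sq_err M abar (T / real N) J \<beta> k n \<le> ennreal ((C * (T / real N) ^ (k + 1))\<^sup>2))"
    if "real k + 1 < abar"
    using mean_sq_err_le_power[OF that] DT by blast
  show "\<exists>C>0. \<forall>(N::nat) (J::nat) (M::'a measure) \<beta>. 1 \<le> N \<longrightarrow> 1 \<le> J \<longrightarrow> indep_BMs M \<beta> \<longrightarrow>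
      (\<forall>n. real n * (T / real N) \<le> T \<longrightarrow>
        mean_sq_err M abar (T / real N) J \<beta> k n \<le> ennreal ((C * (T / real N) powr \<alpha>)\<^sup>2))"
    if "abar \<le> real k + 1" and "0 < \<alpha> \<and> \<alpha> < abar" for \<alpha>
  proof -
    have "0 < \<alpha>" "\<alpha> \<le> real k + 1" "\<alpha> < abar"
      using that by auto
    from mean_sq_err_le_powr[OF this] DT show ?thesis
      by blast
  qed
qed

end
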